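(* Let $X$ be finite, $\mathcal{X}_{lim}\subseteq\mathcal{X}^2$, and let $p$ be an observed random joint choice rule on $\mathcal{X}_{lim}$. The following are equivalent: (1) $p$ has a consumption dependent random utility representation on $\mathcal{X}_{lim}$; (2) there exists a vector $r\ge0$ with $rE=p$; (3) there exists a function $q$, indexed by all $(x,y,A,B)$ with $A,B\in\mathcal{X}$, $(x,y)\in A\times B$, satisfying: (a) $\sum_{A\subseteq A'\subseteq X}\sum_{B\subseteq B'\subseteq X}q(x,y,A',B')=p(x,y,A,B)$ for all $A\times B\in\mathcal{X}_{lim}$ and $(x,y)\in A\times B$; (b) $\sum_{y\in B}q(x,y,A,B)=\sum_{z\in X\setminus B}q(x,z,A,B\cup\{z\})$ for all $A\in\mathcal{X}$, all nonempty $B\subsetneq X$, and all $x\in A$; (c) $q(x,y,A,B)\ge0$ for all $A,B\in\mathcal{X}$, $(x,y)\in A\times B$; (d) $\sum_{x\in A}\sum_{y\in X}q(x,y,A,X)=\sum_{z\in X\setminus A}\sum_{y\in X}q(z,y,A\cup\{z\},X)$ for all $A\in\mathcal{X}$ with $A\ne X$; (e) $\sum_{x\in X}\sum_{y\in X}q(x,y,X,X)=1$.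
   Context: $X$ is finite, $\mathcal{X}$ the nonempty subsets of $X$, $\mathcal{L}(X)$ the linear orders on $X$, $M(\succ,A)$ the $\succ$-maximal element of $A$, $N(x,A)=\{\succ: x\succ y\ \forall y\in A\setminus\{x\}\}$. An observed random joint choice rule on $\mathcal{X}_{lim}$ assigns to each $A\times B\in\mathcal{X}_{lim}$ and $(x,y)\in A\times B$ a number $p(x,y,A,B)\ge0$ with $\sum_{x\in A}\sum_{y\in B}p(x,y,A,B)=1$; view $p$ as a vector indexed by such $(x,y,A,B)$. It has a consumption dependent random utility representation if there exist $\nu\in\Delta(\mathcal{L}(X))$ and a transition function $t:X\times\mathcal{L}(X)\to\Delta(\mathcal{L}(X))$ (with $t_{\succ'}(x,\succ)$ the probability of $\succ'$) such that $p(x,y,A,B)=\sum_{\succ\in N(x,A)}\sum_{\succ'\in N(y,B)}\nu(\succ)t_{\succ'}(x,\succ)$ for all $A\times B\in\mathcal{X}_{lim}$, $(x,y)\in A\times B$. The matrix $E$ has rows indexed by tuples $(\succ,(\succ_z)_{z\in X})\in\mathcal{L}(X)^{|X|+1}$ and columns indexed by $(x,y,A,B)$ with $A\times B\in\mathcal{X}_{lim}$, $(x,y)\in A\times B$; its entry is $1$ if $x=M(\succ,A)$ and $y=M(\succ_x,B)$, and $0$ otherwise. *)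

theory Defs
  imports "HOL-Probability.Probability"
begin

text \<open>The finite set X is the universe of a finite type 'a.
  Linear orders on X are strict linear orders (relations) on UNIV.\<close>

definition lin_orders :: "('a \<times> 'a) set set" where
  "lin_orders = {r. strict_linear_order r}"

definition Mx :: "('a \<times> 'a) set \<Rightarrow> 'a set \<Rightarrow> 'a" where
  "Mx r A = (THE x. x \<in> A \<and> (\<forall>y\<in>A - {x}. (x, y) \<in> r))"

definition Nx :: "'a \<Rightarrow> 'a set \<Rightarrow> ('a \<times> 'a) set set" where
  "Nx x A = {r \<in> lin_orders. \<forall>y\<in>A - {x}. (x, y) \<in> r}"

definition observed_rjcr ::
  "('a set \<times> 'a set) set \<Rightarrow> ('a \<Rightarrow> 'a \<Rightarrow> 'a set \<Rightarrow> 'a set \<Rightarrow> real) \<Rightarrow> bool" where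
  "observed_rjcr Xlim p \<longleftrightarrow>
     (\<forall>(A, B)\<in>Xlim. (\<forall>x\<in>A. \<forall>y\<in>B. p x y A B \<ge> 0) \<and>
        (\<Sum>x\<in>A. \<Sum>y\<in>B. p x y A B) = 1)"

definition cdru_rep ::
  "('a set \<times> 'a set) set \<Rightarrow> ('a \<Rightarrow> 'a \<Rightarrow> 'a set \<Rightarrow> 'a set \<Rightarrow> real) \<Rightarrow> bool" where
  "cdru_rep Xlim p \<longleftrightarrow>
     (\<exists>(\<nu> :: ('a \<times> 'a) set pmf) (t :: 'a \<Rightarrow> ('a \<times> 'a) set \<Rightarrow> ('a \<times> 'a) set pmf).
        set_pmf \<nu> \<subseteq> lin_orders \<and>
        (\<forall>x. \<forall>r\<in>lin_orders. set_pmf (t x r) \<subseteq> lin_orders) \<and>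
        (\<forall>(A, B)\<in>Xlim. \<forall>x\<in>A. \<forall>y\<in>B.
           p x y A B = (\<Sum>r\<in>Nx x A. \<Sum>r'\<in>Nx y B. pmf \<nu> r * pmf (t x r) r')))"

definition E_rows :: "(('a \<times> 'a) set \<times> ('a \<Rightarrow> ('a \<times> 'a) set)) set" where
  "E_rows = {(r, f). r \<in> lin_orders \<and> (\<forall>z. f z \<in> lin_orders)}"

definition E_cols :: "('a set \<times> 'a set) set \<Rightarrow> ('a \<times> 'a \<times> 'a set \<times> 'a set) set" where
  "E_cols Xlim = {(x, y, A, B). (A, B) \<in> Xlim \<and> x \<in> A \<and> y \<in> B}"

definition E_mat :: "(('a \<times> 'a) set \<times> ('a \<Rightarrow> ('a \<times> 'a) set)) \<Rightarrow>
    ('a \<times> 'a \<times> 'a set \<times> 'a set) \<Rightarrow> real" where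
  "E_mat rw cl = (case rw of (r, f) \<Rightarrow> case cl of (x, y, A, B) \<Rightarrow>
      if x = Mx r A \<and> y = Mx (f x) B then 1 else 0)"

end

theory Submission
  imports Defs "HOL-Combinatorics.Multiset_Permutations"
begin

text \<open>
  (1) \<open>\<Leftrightarrow>\<close> (2): a representation \<open>(\<nu>, t)\<close> gives the row weights
  \<open>r(\<succ>, (\<succ>\<^sub>z)\<^sub>z) = \<nu>(\<succ>) \<Prod>\<^sub>z t(z, \<succ>)(\<succ>\<^sub>z)\<close>, i.e. the second-period orders are drawn
  independently given \<open>\<succ>\<close>; conversely \<open>\<nu>\<close> is the marginal of \<open>r\<close> on the first order and
  \<open>t(x, \<succ>)\<close> the conditional law of the \<open>x\<close>-th coordinate of the profile.

  (1) \<open>\<Leftrightarrow>\<close> (3): \<open>q(x, y, A, B)\<close> is the probability that the lower set of \<open>x\<close> under the first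
  order is \<open>A\<close> and that of \<open>y\<close> under the second order is \<open>B\<close>; since \<open>x\<close> is the best element of
  \<open>A\<close> iff \<open>A\<close> lies in its lower set, summing over supersets gives (a). For a random linear order
  the probabilities that the lower set of \<open>y\<close> is \<open>B\<close> form a flow on the Boolean lattice, because
  a nonempty proper down-set is both the lower set of its top element and the lower set of the
  next element minus that element: this gives (b), (d), (e). Conversely every nonnegative flow
  arises in this way, up to its total mass: the order in which the Markov chain that removes
  \<open>u\<close> from the current set \<open>S\<close> with probability proportional to the flow through the edge
  \<open>S \<rightarrow> S - {u}\<close> empties \<open>X\<close> is a random linear order with the prescribed lower-set
  probabilities. Applied to \<open>\<Sum>\<^sub>y q(x, y, A, X)\<close> it yields \<open>\<nu>\<close>, and applied to
  \<open>q(x, \<cdot>, A, \<cdot>)\<close> the kernel \<open>t(x, \<succ>)\<close>, which depends on \<open>\<succ>\<close> only through the lower set of \<open>x\<close>.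
\<close>


section \<open>Finite sums and distributions\<close>

lemma sum_if_unique:
  assumes "finite S" "\<And>a b. a \<in> S \<Longrightarrow> b \<in> S \<Longrightarrow> P a \<Longrightarrow> P b \<Longrightarrow> a = b"
  shows "(\<Sum>y\<in>S. if P y then c else 0) = (if \<exists>y\<in>S. P y then c else 0)"
proof (cases "\<exists>y\<in>S. P y")
  case True
  then obtain y0 where "y0 \<in> S" "P y0" by blast
  have "P y \<longleftrightarrow> y = y0" if "y \<in> S" for y
    using assms(2)[OF that \<open>y0 \<in> S\<close>] \<open>P y0\<close> by blast
  then have "(\<Sum>y\<in>S. if P y then c else 0) = (\<Sum>y\<in>S. if y = y0 then c else 0)"
    by (intro sum.cong) auto
  with \<open>y0 \<in> S\<close> \<open>finite S\<close> True show ?thesis by simp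
qed simp

lemma sum_if_const: "(\<Sum>i\<in>I. if P then f i else 0) = (if P then \<Sum>i\<in>I. f i else 0)"
  by (cases P) simp_all

lemma ex_pmf_with_weights:
  fixes w :: "'b \<Rightarrow> real"
  assumes "finite S" "\<And>x. x \<in> S \<Longrightarrow> 0 \<le> w x" "(\<Sum>x\<in>S. w x) = 1"
  shows "\<exists>\<pi>. set_pmf \<pi> \<subseteq> S \<and> (\<forall>x\<in>S. pmf \<pi> x = w x)"
proof -
  define h where "h x = (if x \<in> S then w x else 0)" for x
  have h_nonneg: "0 \<le> h x" for x
    using assms(2) by (simp add: h_def)
  have "(\<integral>\<^sup>+x. ennreal (h x) \<partial>count_space UNIV) = (\<Sum>x\<in>S. ennreal (h x))"
    by (rule nn_integral_count_space') (auto simp: h_def assms(1))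
  also have "\<dots> = ennreal (\<Sum>x\<in>S. h x)"
    using h_nonneg by simp
  also have "\<dots> = 1"
    using assms(3) by (simp add: h_def)
  finally have "(\<integral>\<^sup>+x. ennreal (h x) \<partial>count_space UNIV) = 1" .
  with h_nonneg show ?thesis
    by (intro exI[of _ "embed_pmf h"]) (auto simp: pmf_embed_pmf set_embed_pmf h_def)
qed

lemma sum_PiE_prod_pmf_component:
  fixes p :: "'i \<Rightarrow> 's pmf"
  assumes I: "finite I" "x \<in> I" and S: "finite S" "\<And>z. z \<in> I \<Longrightarrow> set_pmf (p z) \<subseteq> S"
    and "T \<subseteq> S"
  shows "(\<Sum>f\<in>Pi\<^sub>E I (\<lambda>_. S). if f x \<in> T then \<Prod>z\<in>I. pmf (p z) (f z) else 0)
       = (\<Sum>s\<in>T. pmf (p x) s)"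
proof -
  define h where "h z s = (if z = x \<and> s \<notin> T then 0 else pmf (p z) s)" for z s
  have "(if f x \<in> T then \<Prod>z\<in>I. pmf (p z) (f z) else 0) = (\<Prod>z\<in>I. h z (f z))" for f
  proof (cases "f x \<in> T")
    case False
    with I show ?thesis by (auto simp: h_def prod_zero_iff)
  qed (auto simp: h_def intro: prod.cong)
  then have "(\<Sum>f\<in>Pi\<^sub>E I (\<lambda>_. S). if f x \<in> T then \<Prod>z\<in>I. pmf (p z) (f z) else 0)
      = (\<Prod>z\<in>I. \<Sum>s\<in>S. h z s)"
    using I(1) S(1) by (simp add: prod_sum_PiE)
  also have "\<dots> = (\<Prod>z\<in>I. if z = x then \<Sum>s\<in>T. pmf (p x) s else 1)"
  proof (rule prod.cong[OF refl])
    fix z assume "z \<in> I"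
    show "(\<Sum>s\<in>S. h z s) = (if z = x then \<Sum>s\<in>T. pmf (p x) s else 1)"
    proof (cases "z = x")
      case True
      then have "(\<Sum>s\<in>S. h z s) = (\<Sum>s\<in>S. if s \<in> T then pmf (p x) s else 0)"
        by (intro sum.cong) (auto simp: h_def)
      also have "\<dots> = (\<Sum>s\<in>T. pmf (p x) s)"
        using \<open>T \<subseteq> S\<close> S(1) by (simp add: sum.inter_restrict[symmetric] Int_absorb1)
      finally show ?thesis using True by simp
    next
      case False
      then show ?thesis
        using S \<open>z \<in> I\<close> by (simp add: h_def sum_pmf_eq_1)
    qed
  qed
  also have "\<dots> = (\<Sum>s\<in>T. pmf (p x) s)"
    using I by (simp add: prod.delta)
  finally show ?thesis .
qed

text \<open>Stated multiplicatively so that it also covers total weight \<open>0\<close>, where any \<open>\<pi>\<close> will do.\<close>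
lemma ex_pmf_proportional:
  fixes v :: "'b \<Rightarrow> real"
  assumes "finite S" "S \<noteq> {}" "\<And>x. x \<in> S \<Longrightarrow> 0 \<le> v x"
  shows "\<exists>\<pi>. set_pmf \<pi> \<subseteq> S \<and> (\<forall>x\<in>S. (\<Sum>y\<in>S. v y) * pmf \<pi> x = v x)"
proof (cases "(\<Sum>y\<in>S. v y) = 0")
  case True
  obtain s where "s \<in> S" using assms(2) by blast
  moreover have "\<forall>x\<in>S. v x = 0"
    using True assms by (simp add: sum_nonneg_eq_0_iff)
  ultimately show ?thesis
    using True by (intro exI[of _ "return_pmf s"]) auto
next
  case False
  moreover have "\<exists>\<pi>. set_pmf \<pi> \<subseteq> S \<and> (\<forall>x\<in>S. pmf \<pi> x = v x / (\<Sum>y\<in>S. v y))"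
    using assms False
    by (intro ex_pmf_with_weights) (auto simp: sum_divide_distrib[symmetric] sum_nonneg)
  ultimately show ?thesis by auto
qed

lemma sum_fibres:
  assumes "finite F" "finite T"
  shows "(\<Sum>s\<in>T. \<Sum>f\<in>{f \<in> F. \<phi> f = s}. w f) = (\<Sum>f\<in>F. if \<phi> f \<in> T then w f else 0)"
proof -
  have "(\<Sum>s\<in>T. \<Sum>f\<in>{f \<in> F. \<phi> f = s}. w f) = (\<Sum>s\<in>T. \<Sum>f\<in>{f \<in> {f \<in> F. \<phi> f \<in> T}. \<phi> f = s}. w f)"
    by (rule sum.cong[OF refl], rule arg_cong[of _ _ "sum w"]) auto
  also have "\<dots> = (\<Sum>f\<in>{f \<in> F. \<phi> f \<in> T}. w f)"
    by (rule sum.group) (use assms in auto)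
  also have "\<dots> = (\<Sum>f\<in>F. if \<phi> f \<in> T then w f else 0)"
    using assms(1) by (rule sum.inter_filter)
  finally show ?thesis .
qed

lemma ex_marginal_and_kernel:
  fixes w :: "'r \<Rightarrow> ('x \<Rightarrow> 's) \<Rightarrow> real"
  assumes fin: "finite U" "finite F" "finite S"
    and nonneg: "\<And>r f. r \<in> U \<Longrightarrow> f \<in> F \<Longrightarrow> 0 \<le> w r f"
    and total: "(\<Sum>r\<in>U. \<Sum>f\<in>F. w r f) = 1"
    and F_S: "\<And>f x. f \<in> F \<Longrightarrow> f x \<in> S"
  shows "\<exists>\<nu> t. set_pmf \<nu> \<subseteq> U \<and> (\<forall>x r. set_pmf (t x r) \<subseteq> S) \<and>
    (\<forall>x. \<forall>r\<in>U. \<forall>T\<subseteq>S. (\<Sum>f\<in>F. if f x \<in> T then w r f else 0) = (\<Sum>s\<in>T. pmf \<nu> r * pmf (t x r) s))"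
proof -
  obtain \<nu> where \<nu>: "set_pmf \<nu> \<subseteq> U" "\<forall>r\<in>U. pmf \<nu> r = (\<Sum>f\<in>F. w r f)"
    using ex_pmf_with_weights[of U "\<lambda>r. \<Sum>f\<in>F. w r f"] fin(1) nonneg total
    by (auto intro: sum_nonneg)
  define v where "v x r s = (if r \<in> U then \<Sum>f\<in>{f \<in> F. f x = s}. w r f else 0)" for x r s
  have "S \<noteq> {}"
    using total F_S by fastforce
  then have "\<forall>x r. \<exists>\<pi>. set_pmf \<pi> \<subseteq> S \<and> (\<forall>s\<in>S. (\<Sum>s'\<in>S. v x r s') * pmf \<pi> s = v x r s)"
    using fin(3) by (intro allI ex_pmf_proportional) (auto simp: v_def nonneg intro: sum_nonneg)
  then obtain t where t: "\<forall>x r. set_pmf (t x r) \<subseteq> S \<and>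
      (\<forall>s\<in>S. (\<Sum>s'\<in>S. v x r s') * pmf (t x r) s = v x r s)"
    by (simp only: choice_iff) blast
  have "(\<Sum>f\<in>F. if f x \<in> T then w r f else 0) = (\<Sum>s\<in>T. pmf \<nu> r * pmf (t x r) s)"
    if "r \<in> U" "T \<subseteq> S" for x r T
  proof -
    have mass: "(\<Sum>s'\<in>S. v x r s') = pmf \<nu> r"
      using sum_fibres[OF fin(2,3), where \<phi> = "\<lambda>f. f x" and w = "w r"] F_S \<nu>(2) that(1)
      by (simp add: v_def)
    have "pmf \<nu> r * pmf (t x r) s = v x r s" if "s \<in> T" for s
    proof -
      from that \<open>T \<subseteq> S\<close> have "s \<in> S" by blast
      with t have "(\<Sum>s'\<in>S. v x r s') * pmf (t x r) s = v x r s" by blast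
      with mass show ?thesis by simp
    qed
    then show ?thesis
      using sum_fibres[OF fin(2) finite_subset[OF that(2) fin(3)], where \<phi> = "\<lambda>f. f x" and w = "w r"]
        that(1)
      by (simp add: v_def)
  qed
  with \<nu>(1) t show ?thesis by blast
qed

lemma sum_permutations_of_set_Cons:
  assumes "finite S" "S \<noteq> {}"
  shows "(\<Sum>xs\<in>permutations_of_set S. F xs)
       = (\<Sum>x\<in>S. \<Sum>xs\<in>permutations_of_set (S - {x}). F (x # xs))"
proof -
  have "(\<Sum>xs\<in>permutations_of_set S. F xs)
      = (\<Sum>x\<in>S. \<Sum>xs\<in>(#) x ` permutations_of_set (S - {x}). F xs)"
    unfolding permutations_of_set_nonempty[OF assms(2)]
    by (rule sum.UNION_disjoint) (auto simp: assms)
  also have "\<dots> = (\<Sum>x\<in>S. \<Sum>xs\<in>permutations_of_set (S - {x}). F (x # xs))"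
    by (rule sum.cong[OF refl]) (subst sum.reindex, auto intro: inj_onI)
  finally show ?thesis .
qed

lemma sum_permutations_of_set_snoc:
  assumes "finite S" "S \<noteq> {}"
  shows "(\<Sum>xs\<in>permutations_of_set S. F xs)
       = (\<Sum>x\<in>S. \<Sum>xs\<in>permutations_of_set (S - {x}). F (xs @ [x]))"
proof -
  have rev: "(\<Sum>xs\<in>permutations_of_set T. G (rev xs)) = (\<Sum>xs\<in>permutations_of_set T. G xs)"
    for T and G :: "'a list \<Rightarrow> 'b"
    by (subst (2) rev_permutations_of_set[symmetric], subst sum.reindex) (auto intro: inj_onI)
  have "(\<Sum>xs\<in>permutations_of_set S. F xs) = (\<Sum>xs\<in>permutations_of_set S. F (rev xs))"
    by (rule rev[symmetric])
  also have "\<dots> = (\<Sum>x\<in>S. \<Sum>xs\<in>permutations_of_set (S - {x}). F (rev xs @ [x]))"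
    by (simp add: sum_permutations_of_set_Cons[OF assms])
  also have "\<dots> = (\<Sum>x\<in>S. \<Sum>xs\<in>permutations_of_set (S - {x}). F (xs @ [x]))"
  proof (rule sum.cong[OF refl])
    fix x
    show "(\<Sum>xs\<in>permutations_of_set (S - {x}). F (rev xs @ [x]))
        = (\<Sum>xs\<in>permutations_of_set (S - {x}). F (xs @ [x]))"
      using rev[where T = "S - {x}" and G = "\<lambda>xs. F (xs @ [x])"] by simp
  qed
  finally show ?thesis .
qed

lemma inj_on_append_Cons:
  "inj_on (\<lambda>(us, vs). us @ y # vs) {(us, vs). y \<notin> set us \<and> y \<notin> set vs}"
  by (auto intro!: inj_onI simp: append_Cons_eq_iff)


section \<open>Linear orders and lower sets\<close>

lemma lin_orders_iff: "r \<in> lin_orders \<longleftrightarrow> trans r \<and> irrefl r \<and> total r"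
  by (simp add: lin_orders_def strict_linear_order_on_def)

lemma lin_orders_irrefl: "r \<in> lin_orders \<Longrightarrow> (a, a) \<notin> r"
  by (simp add: lin_orders_iff irrefl_def)

lemma lin_orders_trans: "r \<in> lin_orders \<Longrightarrow> (a, b) \<in> r \<Longrightarrow> (b, c) \<in> r \<Longrightarrow> (a, c) \<in> r"
  unfolding lin_orders_iff by (meson transD)

lemma lin_orders_asym: "r \<in> lin_orders \<Longrightarrow> (a, b) \<in> r \<Longrightarrow> (b, a) \<notin> r"
  using lin_orders_irrefl[of r a] lin_orders_trans[of r a b a] by blast

lemma lin_orders_total: "r \<in> lin_orders \<Longrightarrow> a \<noteq> b \<Longrightarrow> (a, b) \<in> r \<or> (b, a) \<in> r"
  by (simp add: lin_orders_iff total_on_def)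

lemma converse_lin_orders: "r \<in> lin_orders \<Longrightarrow> r\<inverse> \<in> lin_orders"
  by (auto simp: lin_orders_iff irrefl_def total_on_def)

lemma lin_orders_ex_max:
  fixes r :: "('a::finite \<times> 'a) set"
  assumes r: "r \<in> lin_orders" and "A \<noteq> {}"
  obtains m where "m \<in> A" "\<forall>y\<in>A - {m}. (m, y) \<in> r"
proof -
  have "wf r"
    using r by (intro finite_acyclic_wf) (auto simp: lin_orders_iff acyclic_irrefl trancl_id)
  moreover obtain a where "a \<in> A" using \<open>A \<noteq> {}\<close> by blast
  ultimately obtain m where m: "m \<in> A" and min: "\<And>y. (y, m) \<in> r \<Longrightarrow> y \<notin> A"
    by (rule wfE_min) blast
  have "(m, y) \<in> r" if "y \<in> A - {m}" for y
    using that min[of y] lin_orders_total[OF r, of m y] by blast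
  with m that show thesis by blast
qed

text \<open>\<open>(x, z) \<in> r\<close> means that \<open>x\<close> is preferred to \<open>z\<close>, so this is \<open>x\<close> together with everything
  it beats.\<close>
definition lower_set :: "('a \<times> 'a) set \<Rightarrow> 'a \<Rightarrow> 'a set" where
  "lower_set r x = insert x {z. (x, z) \<in> r}"

lemma mem_lower_set: "z \<in> lower_set r x \<longleftrightarrow> z = x \<or> (x, z) \<in> r"
  by (auto simp: lower_set_def)

lemma Nx_subset_lin_orders: "Nx x A \<subseteq> lin_orders"
  by (auto simp: Nx_def)

lemma Nx_eq: "x \<in> A \<Longrightarrow> Nx x A = {r \<in> lin_orders. A \<subseteq> lower_set r x}"
  by (auto simp: Nx_def lower_set_def)

lemma Mx_eqI:
  assumes r: "r \<in> lin_orders" and "x \<in> A" "\<forall>y\<in>A - {x}. (x, y) \<in> r"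
  shows "Mx r A = x"
  unfolding Mx_def
proof (rule the_equality)
  fix x' assume "x' \<in> A \<and> (\<forall>y\<in>A - {x'}. (x', y) \<in> r)"
  with assms lin_orders_asym[OF r, of x x'] show "x' = x" by blast
qed (use assms in blast)

lemma Mx_eq_iff_subset_lower_set:
  fixes A :: "'a::finite set"
  assumes r: "r \<in> lin_orders" and x: "x \<in> A"
  shows "Mx r A = x \<longleftrightarrow> A \<subseteq> lower_set r x"
proof
  assume "Mx r A = x"
  obtain m where m: "m \<in> A" "\<forall>y\<in>A - {m}. (m, y) \<in> r"
    using lin_orders_ex_max[OF r] x by blast
  with \<open>Mx r A = x\<close> have "m = x" using Mx_eqI[OF r m] by simp
  with m show "A \<subseteq> lower_set r x" by (auto simp: mem_lower_set)
next
  assume "A \<subseteq> lower_set r x"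
  then show "Mx r A = x"
    by (intro Mx_eqI[OF r x]) (auto simp: mem_lower_set)
qed

lemma Mx_in:
  fixes A :: "'a::finite set"
  assumes "r \<in> lin_orders" "A \<noteq> {}"
  shows "Mx r A \<in> A"
proof -
  obtain m where "m \<in> A" "\<forall>y\<in>A - {m}. (m, y) \<in> r"
    using lin_orders_ex_max[OF assms] .
  with Mx_eqI[OF assms(1)] show ?thesis by simp
qed

lemma lower_set_inj:
  assumes r: "r \<in> lin_orders" and eq: "lower_set r y = lower_set r y'"
  shows "y = y'"
proof -
  have "y \<in> lower_set r y'" "y' \<in> lower_set r y"
    using eq by (auto simp: lower_set_def)
  then show ?thesis
    using lin_orders_asym[OF r] by (auto simp: mem_lower_set)
qed

lemma lower_set_eq_insert_unique:
  assumes r: "r \<in> lin_orders" and "z \<notin> B" "z' \<notin> B"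
    and "lower_set r z = insert z B" "lower_set r z' = insert z' B"
  shows "z = z'"
proof (rule ccontr)
  assume "z \<noteq> z'"
  then have "z' \<in> lower_set r z \<or> z \<in> lower_set r z'"
    using lin_orders_total[OF r] by (auto simp: mem_lower_set)
  with assms \<open>z \<noteq> z'\<close> show False by auto
qed

definition downset :: "('a \<times> 'a) set \<Rightarrow> 'a set \<Rightarrow> bool" where
  "downset r B \<longleftrightarrow> (\<forall>a\<in>B. \<forall>b. (a, b) \<in> r \<longrightarrow> b \<in> B)"

lemma lower_set_downset:
  assumes r: "r \<in> lin_orders"
  shows "downset r (lower_set r y)"
  unfolding downset_def
proof (intro ballI allI impI)
  fix a b assume "a \<in> lower_set r y" "(a, b) \<in> r"
  then have "(y, b) \<in> r"
    using lin_orders_trans[OF r, of y a b] by (auto simp: mem_lower_set)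
  then show "b \<in> lower_set r y" by (simp add: mem_lower_set)
qed

lemma lower_set_insert_downset:
  assumes r: "r \<in> lin_orders" and "z \<notin> B" and z: "lower_set r z = insert z B"
  shows "downset r B"
  unfolding downset_def
proof (intro ballI allI impI)
  fix a b assume "a \<in> B" "(a, b) \<in> r"
  have zx: "x \<in> insert z B \<longleftrightarrow> x = z \<or> (z, x) \<in> r" for x
    by (simp add: z[symmetric] mem_lower_set)
  from \<open>a \<in> B\<close> \<open>z \<notin> B\<close> zx[of a] have "(z, a) \<in> r" by auto
  with \<open>(a, b) \<in> r\<close> have "(z, b) \<in> r" "b \<noteq> z"
    using lin_orders_trans[OF r, of z a b] lin_orders_asym[OF r, of z a] by auto
  with zx[of b] show "b \<in> B" by simp
qed

lemma ex_lower_set_eq_iff_downset: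
  fixes B :: "'a::finite set"
  assumes r: "r \<in> lin_orders" and "B \<noteq> {}"
  shows "(\<exists>y\<in>B. lower_set r y = B) \<longleftrightarrow> downset r B"
proof
  assume "\<exists>y\<in>B. lower_set r y = B"
  then show "downset r B" using lower_set_downset[OF r] by blast
next
  assume down: "downset r B"
  obtain m where m: "m \<in> B" "\<forall>y\<in>B - {m}. (m, y) \<in> r"
    using lin_orders_ex_max[OF r \<open>B \<noteq> {}\<close>] .
  have "lower_set r m \<subseteq> B"
    using m(1) down by (auto simp: mem_lower_set downset_def)
  moreover have "B \<subseteq> lower_set r m"
    using m(2) by (auto simp: mem_lower_set)
  ultimately show "\<exists>y\<in>B. lower_set r y = B" using m(1) by blast
qed

lemma ex_lower_set_eq_insert_iff_downset:
  fixes B :: "'a::finite set"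
  assumes r: "r \<in> lin_orders" and "B \<noteq> UNIV"
  shows "(\<exists>z\<in>UNIV - B. lower_set r z = insert z B) \<longleftrightarrow> downset r B"
proof
  assume "\<exists>z\<in>UNIV - B. lower_set r z = insert z B"
  then show "downset r B" using lower_set_insert_downset[OF r] by blast
next
  assume down: "downset r B"
  have "UNIV - B \<noteq> {}" using \<open>B \<noteq> UNIV\<close> by blast
  then obtain m where m: "m \<in> UNIV - B" "\<forall>y\<in>UNIV - B - {m}. (m, y) \<in> r\<inverse>"
    by (rule lin_orders_ex_max[OF converse_lin_orders[OF r]])
  have "lower_set r m \<subseteq> insert m B"
  proof
    fix b assume "b \<in> lower_set r m"
    then have "b = m \<or> (m, b) \<in> r" by (simp add: mem_lower_set)
    then show "b \<in> insert m B"
      using m(2) lin_orders_asym[OF r, of m b] by blast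
  qed
  moreover have "B \<subseteq> lower_set r m"
  proof
    fix b assume "b \<in> B"
    with m(1) down have "(b, m) \<notin> r" "b \<noteq> m" by (auto simp: downset_def)
    with lin_orders_total[OF r, of m b] show "b \<in> lower_set r m"
      by (auto simp: mem_lower_set)
  qed
  ultimately have "lower_set r m = insert m B" by (auto simp: lower_set_def)
  with m(1) show "\<exists>z\<in>UNIV - B. lower_set r z = insert z B" by blast
qed

text \<open>Both sides equal \<open>c\<close> if \<open>B\<close> is a down-set of \<open>r\<close> (the lower set of its top element,
  and the lower set of the next element with that element removed) and \<open>0\<close> otherwise.\<close>
lemma sum_lower_set_eq_sum_lower_set_insert:
  fixes B :: "'a::finite set"
  assumes r: "r \<in> lin_orders" and B: "B \<noteq> {}" "B \<noteq> UNIV"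
  shows "(\<Sum>y\<in>B. if lower_set r y = B then c else 0)
       = (\<Sum>z\<in>UNIV - B. if lower_set r z = insert z B then c else 0)"
proof -
  have "(\<Sum>y\<in>B. if lower_set r y = B then c else 0)
      = (if \<exists>y\<in>B. lower_set r y = B then c else 0)"
    by (rule sum_if_unique) (auto intro: lower_set_inj[OF r])
  also have "\<dots> = (if \<exists>z\<in>UNIV - B. lower_set r z = insert z B then c else 0)"
    using ex_lower_set_eq_iff_downset[OF r B(1)] ex_lower_set_eq_insert_iff_downset[OF r B(2)]
    by simp
  also have "\<dots> = (\<Sum>z\<in>UNIV - B. if lower_set r z = insert z B then c else 0)"
    by (rule sum_if_unique[symmetric]) (auto intro: lower_set_eq_insert_unique[OF r])
  finally show ?thesis .
qed

lemma sum_supersets_lower_set: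
  fixes A :: "'a::finite set"
  assumes "x \<in> A"
  shows "(\<Sum>A'\<in>{A'. A \<subseteq> A'}. \<Sum>r\<in>lin_orders. if lower_set r x = A' then F r else 0)
       = (\<Sum>r\<in>Nx x A. F r)"
proof -
  have "(\<Sum>A'\<in>{A'. A \<subseteq> A'}. \<Sum>r\<in>lin_orders. if lower_set r x = A' then F r else 0)
      = (\<Sum>r\<in>lin_orders. \<Sum>A'\<in>{A'. A \<subseteq> A'}. if lower_set r x = A' then F r else 0)"
    by (rule sum.swap)
  also have "\<dots> = (\<Sum>r\<in>lin_orders. if A \<subseteq> lower_set r x then F r else 0)"
    by (simp add: sum.delta)
  also have "\<dots> = (\<Sum>r\<in>Nx x A. F r)"
    by (simp add: Nx_eq[OF assms] sum.inter_filter)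
  finally show ?thesis .
qed

primrec order_of_list :: "'a list \<Rightarrow> ('a \<times> 'a) set" where
  "order_of_list [] = {}"
| "order_of_list (x # xs) = Pair x ` set xs \<union> order_of_list xs"

lemma order_of_list_subset: "order_of_list xs \<subseteq> set xs \<times> set xs"
  by (induction xs) auto

lemma order_of_list_irrefl: "distinct xs \<Longrightarrow> (a, a) \<notin> order_of_list xs"
  by (induction xs) auto

lemma order_of_list_trans:
  "distinct xs \<Longrightarrow> (a, b) \<in> order_of_list xs \<Longrightarrow> (b, c) \<in> order_of_list xs
    \<Longrightarrow> (a, c) \<in> order_of_list xs"
proof (induction xs)
  case (Cons x xs)
  have "(b, c) \<in> order_of_list xs"
    using Cons.prems order_of_list_subset by fastforce
  moreover from this have "c \<in> set xs"
    using order_of_list_subset by blast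
  ultimately show ?case
    using Cons by auto
qed simp

lemma order_of_list_total:
  "a \<in> set xs \<Longrightarrow> b \<in> set xs \<Longrightarrow> a \<noteq> b \<Longrightarrow> (a, b) \<in> order_of_list xs \<or> (b, a) \<in> order_of_list xs"
  by (induction xs) auto

lemma order_of_list_in_lin_orders:
  assumes "set xs = UNIV" "distinct xs"
  shows "order_of_list xs \<in> lin_orders"
  unfolding lin_orders_iff
proof (intro conjI)
  show "trans (order_of_list xs)"
    using order_of_list_trans[OF assms(2)] by (blast intro: transI)
  show "irrefl (order_of_list xs)"
    using order_of_list_irrefl[OF assms(2)] by (simp add: irrefl_def)
  show "total (order_of_list xs)"
  proof (rule total_onI)
    fix a b :: 'a
    assume "a \<noteq> b"
    then show "(a, b) \<in> order_of_list xs \<or> (b, a) \<in> order_of_list xs"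
      using order_of_list_total[of a xs b] assms(1) by simp
  qed
qed

lemma lower_set_order_of_list:
  "distinct (us @ y # vs) \<Longrightarrow> lower_set (order_of_list (us @ y # vs)) y = insert y (set vs)"
proof (induction us)
  case Nil
  then show ?case
    using order_of_list_subset[of vs] by (auto simp: lower_set_def)
next
  case (Cons u us)
  then have "u \<noteq> y" by auto
  with Cons show ?case by (auto simp: lower_set_def)
qed

lemma lin_orders_nonempty: "(lin_orders :: ('a::finite \<times> 'a) set set) \<noteq> {}"
proof -
  obtain xs :: "'a list" where "set xs = UNIV" "distinct xs"
    using finite_distinct_list[of "UNIV :: 'a set"] by auto
  then show ?thesis using order_of_list_in_lin_orders by blast
qed

lemma permutations_lower_set_order_of_list:
  fixes y :: "'a::finite"
  assumes "y \<in> B"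
  shows "{xs \<in> permutations_of_set UNIV. lower_set (order_of_list xs) y = B}
       = (\<lambda>(us, vs). us @ y # vs)
          ` (permutations_of_set (UNIV - B) \<times> permutations_of_set (B - {y}))"
proof (intro equalityI subsetI)
  fix xs assume "xs \<in> {xs \<in> permutations_of_set UNIV. lower_set (order_of_list xs) y = B}"
  then have xs: "set xs = UNIV" "distinct xs" "lower_set (order_of_list xs) y = B"
    by (auto simp: permutations_of_set_def)
  obtain us vs where xs_eq: "xs = us @ y # vs"
    using split_list[of y xs] xs(1) by auto
  with xs have "insert y (set vs) = B"
    using lower_set_order_of_list[of us y vs] by simp
  with xs xs_eq have "set vs = B - {y}" "set us = UNIV - B"
    by auto
  with xs xs_eq show "xs \<in> (\<lambda>(us, vs). us @ y # vs)
      ` (permutations_of_set (UNIV - B) \<times> permutations_of_set (B - {y}))"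
    by (auto simp: permutations_of_set_def)
next
  fix xs assume "xs \<in> (\<lambda>(us, vs). us @ y # vs)
    ` (permutations_of_set (UNIV - B) \<times> permutations_of_set (B - {y}))"
  then obtain us vs where xs_eq: "xs = us @ y # vs"
    and us: "set us = UNIV - B" "distinct us" and vs: "set vs = B - {y}" "distinct vs"
    by (auto simp: permutations_of_set_def)
  with assms have "distinct xs" "set xs = UNIV" by auto
  moreover have "lower_set (order_of_list xs) y = B"
    using lower_set_order_of_list[of us y vs] \<open>distinct xs\<close> xs_eq vs assms by auto
  ultimately show "xs \<in> {xs \<in> permutations_of_set UNIV. lower_set (order_of_list xs) y = B}"
    by (simp add: permutations_of_set_def)
qed


section \<open>Random linear orders and flows\<close>

definition lower_set_prob :: "('a \<times> 'a) set pmf \<Rightarrow> 'a \<Rightarrow> 'a set \<Rightarrow> real" where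
  "lower_set_prob \<pi> y B = (\<Sum>r\<in>lin_orders. if lower_set r y = B then pmf \<pi> r else 0)"

lemma lower_set_prob_nonneg: "0 \<le> lower_set_prob \<pi> y B"
  by (simp add: lower_set_prob_def sum_nonneg)

lemma sum_supersets_lower_set_prob:
  fixes B :: "'a::finite set"
  shows "y \<in> B \<Longrightarrow> (\<Sum>B'\<in>{B'. B \<subseteq> B'}. lower_set_prob \<pi> y B') = (\<Sum>r\<in>Nx y B. pmf \<pi> r)"
  unfolding lower_set_prob_def by (rule sum_supersets_lower_set)

lemma lower_set_prob_conservation:
  fixes B :: "'a::finite set"
  assumes "B \<noteq> {}" "B \<noteq> UNIV"
  shows "(\<Sum>y\<in>B. lower_set_prob \<pi> y B) = (\<Sum>z\<in>UNIV - B. lower_set_prob \<pi> z (insert z B))"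
  unfolding lower_set_prob_def
  by (subst (1 2) sum.swap) (intro sum.cong refl sum_lower_set_eq_sum_lower_set_insert assms)

lemma sum_lower_set_prob_UNIV:
  fixes \<pi> :: "('a::finite \<times> 'a) set pmf"
  assumes "set_pmf \<pi> \<subseteq> lin_orders"
  shows "(\<Sum>y\<in>UNIV. lower_set_prob \<pi> y UNIV) = 1"
proof -
  have top: "(\<Sum>y\<in>UNIV. if lower_set r y = UNIV then c else 0) = c"
    if r: "r \<in> lin_orders" for r :: "('a \<times> 'a) set" and c :: real
  proof -
    have "lower_set r (Mx r UNIV) = UNIV"
      using Mx_eq_iff_subset_lower_set[OF r, of "Mx r UNIV" UNIV] by auto
    then show ?thesis
      by (subst sum_if_unique) (auto intro: lower_set_inj[OF r])
  qed
  have "(\<Sum>y\<in>UNIV. lower_set_prob \<pi> y UNIV) = (\<Sum>r\<in>lin_orders. pmf \<pi> r)"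
    unfolding lower_set_prob_def by (subst sum.swap) (simp add: top)
  also have "\<dots> = 1"
    using assms by (simp add: sum_pmf_eq_1)
  finally show ?thesis .
qed

lemma ex_lower_set_prob_of_list_weights:
  fixes W :: "'a::finite list \<Rightarrow> real"
  assumes "\<And>xs. xs \<in> permutations_of_set UNIV \<Longrightarrow> 0 \<le> W xs"
    and "(\<Sum>xs\<in>permutations_of_set UNIV. W xs) = 1"
  shows "\<exists>\<pi>. set_pmf \<pi> \<subseteq> lin_orders \<and> (\<forall>y B. lower_set_prob \<pi> y B
    = (\<Sum>xs\<in>permutations_of_set UNIV. if lower_set (order_of_list xs) y = B then W xs else 0))"
proof -
  define w where "w r = (\<Sum>xs\<in>{xs \<in> permutations_of_set UNIV. order_of_list xs = r}. W xs)" for r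
  have group: "(\<Sum>r\<in>lin_orders. \<Sum>xs\<in>{xs \<in> permutations_of_set UNIV. order_of_list xs = r}. F xs)
      = (\<Sum>xs\<in>permutations_of_set UNIV. F xs)" for F :: "'a list \<Rightarrow> real"
    by (rule sum.group[OF finite_permutations_of_set])
      (auto simp: permutations_of_set_def intro: order_of_list_in_lin_orders)
  have "0 \<le> w r" for r
    unfolding w_def using assms(1) by (auto intro!: sum_nonneg)
  moreover have "(\<Sum>r\<in>lin_orders. w r) = 1"
    unfolding w_def group by (rule assms(2))
  ultimately obtain \<pi> where \<pi>: "set_pmf \<pi> \<subseteq> lin_orders" "\<forall>r\<in>lin_orders. pmf \<pi> r = w r"
    using ex_pmf_with_weights[of lin_orders w] by auto
  have "lower_set_prob \<pi> y B
      = (\<Sum>r\<in>lin_orders. \<Sum>xs\<in>{xs \<in> permutations_of_set UNIV. order_of_list xs = r}.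
          if lower_set (order_of_list xs) y = B then W xs else 0)" for y B
    unfolding lower_set_prob_def using \<pi>(2) by (intro sum.cong refl) (auto simp: w_def)
  with \<pi>(1) show ?thesis
    unfolding group by blast
qed

definition outflow :: "('a \<Rightarrow> 'a set \<Rightarrow> real) \<Rightarrow> 'a set \<Rightarrow> real" where
  "outflow g S = (\<Sum>y\<in>S. g y S)"

text \<open>\<open>g y B\<close> is the flow along the edge from \<open>B\<close> down to \<open>B - {y}\<close> of the Boolean lattice
  of subsets; every nonempty proper subset receives what it passes on.\<close>
locale flow =
  fixes g :: "'a::finite \<Rightarrow> 'a set \<Rightarrow> real"
  assumes nonneg: "y \<in> B \<Longrightarrow> 0 \<le> g y B"
    and conservation:
      "B \<noteq> {} \<Longrightarrow> B \<noteq> UNIV \<Longrightarrow> outflow g B = (\<Sum>z\<in>UNIV - B. g z (insert z B))"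
begin

lemma outflow_nonneg: "0 \<le> outflow g S"
  unfolding outflow_def by (rule sum_nonneg) (simp add: nonneg)

lemma le_outflow: "y \<in> S \<Longrightarrow> g y S \<le> outflow g S"
  unfolding outflow_def by (rule member_le_sum) (auto simp: nonneg)

lemma eq_0_if_outflow_eq_0: "outflow g S = 0 \<Longrightarrow> y \<in> S \<Longrightarrow> g y S = 0"
  using le_outflow nonneg by (metis order_antisym)

lemma mult_div_outflow: "y \<in> S \<Longrightarrow> outflow g S * (g y S / outflow g S) = g y S"
  using eq_0_if_outflow_eq_0 by (cases "outflow g S = 0") auto

lemma outflow_remove_pos:
  assumes "y \<in> S" "S - {y} \<noteq> {}" "0 < g y S"
  shows "0 < outflow g (S - {y})"
proof -
  have "g y S = g y (insert y (S - {y}))"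
    using assms(1) by (simp add: insert_absorb)
  also have "\<dots> \<le> (\<Sum>z\<in>UNIV - (S - {y}). g z (insert z (S - {y})))"
    by (rule member_le_sum) (auto simp: nonneg)
  also have "\<dots> = outflow g (S - {y})"
    using assms(2) by (intro conservation[symmetric]) auto
  finally show ?thesis using assms(3) by simp
qed

lemma outflow_eq_0_if_total_eq_0:
  assumes "outflow g UNIV = 0"
  shows "C \<noteq> UNIV \<Longrightarrow> outflow g (UNIV - C) = 0"
  using finite[of C]
proof (induction C rule: finite_psubset_induct)
  case (psubset C)
  show ?case
  proof (cases "C = {}")
    case False
    have "UNIV - C \<noteq> {}" "UNIV - C \<noteq> UNIV"
      using False psubset.prems by auto
    from conservation[OF this]
    have "outflow g (UNIV - C) = (\<Sum>z\<in>C. g z (insert z (UNIV - C)))"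
      by (simp add: Diff_Diff_Int)
    also have "\<dots> = 0"
    proof (intro sum.neutral ballI)
      fix z assume "z \<in> C"
      then have "insert z (UNIV - C) = UNIV - (C - {z})" "C - {z} \<subset> C" by auto
      with psubset show "g z (insert z (UNIV - C)) = 0"
        using eq_0_if_outflow_eq_0 by auto
    qed
    finally show ?thesis .
  qed (use assms in simp)
qed

lemma eq_0_if_total_eq_0:
  assumes "outflow g UNIV = 0" "y \<in> B"
  shows "g y B = 0"
proof -
  have "outflow g (UNIV - (UNIV - B)) = 0"
    using assms by (intro outflow_eq_0_if_total_eq_0) auto
  with assms(2) show ?thesis
    using eq_0_if_outflow_eq_0 by (simp add: Diff_Diff_Int)
qed

text \<open>The probability that the Markov chain which removes \<open>u\<close> from the current set \<open>S\<close> with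
  probability \<open>g u S / outflow g S\<close> removes, starting from \<open>S\<close>, the elements of \<open>us\<close> in this
  order.\<close>
fun path_prob :: "'a set \<Rightarrow> 'a list \<Rightarrow> real" where
  "path_prob S [] = 1"
| "path_prob S (u # us) = g u S / outflow g S * path_prob (S - {u}) us"

lemma path_prob_append: "path_prob S (us @ vs) = path_prob S us * path_prob (S - set us) vs"
  by (induction us arbitrary: S) (simp_all add: Diff_insert2[symmetric])

lemma path_prob_nonneg: "distinct us \<Longrightarrow> set us \<subseteq> S \<Longrightarrow> 0 \<le> path_prob S us"
proof (induction us arbitrary: S)
  case (Cons u us)
  then have "set us \<subseteq> S - {u}" by auto
  with Cons have "0 \<le> path_prob (S - {u}) us" by simp
  with Cons.prems show ?case
    by (auto intro!: mult_nonneg_nonneg divide_nonneg_nonneg simp: nonneg outflow_nonneg)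
qed simp

lemma sum_path_prob:
  "0 < outflow g S \<Longrightarrow> (\<Sum>us\<in>permutations_of_set S. path_prob S us) = 1"
  using finite[of S]
proof (induction S rule: finite_psubset_induct)
  case (psubset S)
  have S_ne: "S \<noteq> {}"
    using psubset.prems by (auto simp: outflow_def)
  have rest: "g u S * (\<Sum>ws\<in>permutations_of_set (S - {u}). path_prob (S - {u}) ws) = g u S"
    if "u \<in> S" for u
  proof (cases "S - {u} = {}")
    case False
    show ?thesis
    proof (cases "g u S = 0")
      case False
      with nonneg[OF that] have "0 < g u S" by simp
      with outflow_remove_pos[OF that \<open>S - {u} \<noteq> {}\<close>] psubset.IH[of "S - {u}"] that
      show ?thesis by auto
    qed simp
  next
    case True
    show ?thesis unfolding True by simp
  qed
  have "(\<Sum>us\<in>permutations_of_set S. path_prob S us)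
      = (\<Sum>u\<in>S. g u S / outflow g S * (\<Sum>ws\<in>permutations_of_set (S - {u}). path_prob (S - {u}) ws))"
    using psubset.prems
    by (simp add: sum_permutations_of_set_Cons[OF _ S_ne] sum_distrib_left)
  also have "\<dots> = (\<Sum>u\<in>S. g u S / outflow g S)"
    by (rule sum.cong[OF refl]) (simp only: times_divide_eq_left rest)
  also have "\<dots> = (\<Sum>u\<in>S. g u S) / outflow g S"
    by (simp add: sum_divide_distrib)
  also have "\<dots> = 1"
    using psubset.prems by (simp add: outflow_def)
  finally show ?case .
qed

lemma sum_path_prob_remove:
  assumes "y \<in> S" "0 < g y S"
  shows "(\<Sum>vs\<in>permutations_of_set (S - {y}). path_prob (S - {y}) vs) = 1"
proof (cases "S - {y} = {}")
  case True
  show ?thesis unfolding True by simp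
next
  case False
  with assms show ?thesis
    using outflow_remove_pos sum_path_prob by blast
qed

lemma sum_path_prob_snoc:
  "(\<Sum>us\<in>permutations_of_set D. path_prob S (us @ [z]))
   = (\<Sum>us\<in>permutations_of_set D. path_prob S us) * (g z (S - D) / outflow g (S - D))"
proof -
  have "(\<Sum>us\<in>permutations_of_set D. path_prob S (us @ [z]))
      = (\<Sum>us\<in>permutations_of_set D. path_prob S us * (g z (S - D) / outflow g (S - D)))"
    by (intro sum.cong refl) (auto simp: path_prob_append permutations_of_set_def)
  then show ?thesis
    by (simp only: sum_distrib_right)
qed

lemma sum_path_prob_prefix:
  assumes pos: "0 < outflow g UNIV"
  shows "C \<noteq> UNIV \<Longrightarrow>
    (\<Sum>us\<in>permutations_of_set C. path_prob UNIV us) = outflow g (UNIV - C) / outflow g UNIV"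
  using finite[of C]
proof (induction C rule: finite_psubset_induct)
  case (psubset C)
  show ?case
  proof (cases "C = {}")
    case False
    have step: "(\<Sum>us\<in>permutations_of_set (C - {z}). path_prob UNIV (us @ [z]))
        = g z (insert z (UNIV - C)) / outflow g UNIV" if "z \<in> C" for z
    proof -
      have z: "UNIV - (C - {z}) = insert z (UNIV - C)" "C - {z} \<subset> C" "C - {z} \<noteq> UNIV"
        using that psubset.prems by auto
      then show ?thesis
        using psubset.IH[OF z(2,3)]
        by (simp only: sum_path_prob_snoc z(1) times_divide_eq_left mult_div_outflow[OF insertI1])
    qed
    have "UNIV - C \<noteq> {}" "UNIV - C \<noteq> UNIV"
      using False psubset.prems by auto
    from conservation[OF this]
    have "outflow g (UNIV - C) = (\<Sum>z\<in>C. g z (insert z (UNIV - C)))"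
      by (simp add: Diff_Diff_Int)
    with False show ?thesis
      by (simp add: sum_permutations_of_set_snoc step sum_divide_distrib)
  qed (use pos in simp)
qed

lemma sum_path_prob_lower_set:
  assumes pos: "0 < outflow g UNIV" and "y \<in> B"
  shows "(\<Sum>xs\<in>permutations_of_set UNIV.
            if lower_set (order_of_list xs) y = B then path_prob UNIV xs else 0)
       = g y B / outflow g UNIV"
proof -
  let ?U = "permutations_of_set (UNIV - B)" and ?V = "permutations_of_set (B - {y})"
  have inj: "inj_on (\<lambda>(us, vs). us @ y # vs) (?U \<times> ?V)"
    by (rule inj_on_subset[OF inj_on_append_Cons])
      (use \<open>y \<in> B\<close> in \<open>auto simp: permutations_of_set_def\<close>)
  have "(\<Sum>xs\<in>permutations_of_set UNIV.
            if lower_set (order_of_list xs) y = B then path_prob UNIV xs else 0)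
      = (\<Sum>xs\<in>{xs \<in> permutations_of_set UNIV. lower_set (order_of_list xs) y = B}.
            path_prob UNIV xs)"
    by (simp add: sum.inter_filter)
  also have "\<dots> = (\<Sum>(us, vs)\<in>?U \<times> ?V. path_prob UNIV (us @ y # vs))"
    unfolding permutations_lower_set_order_of_list[OF \<open>y \<in> B\<close>] sum.reindex[OF inj]
    by (simp add: case_prod_unfold comp_def)
  also have "\<dots> = (\<Sum>(us, vs)\<in>?U \<times> ?V.
      path_prob UNIV us * (g y B / outflow g B * path_prob (B - {y}) vs))"
    by (intro sum.cong refl)
      (auto simp: path_prob_append permutations_of_set_def Diff_Diff_Int)
  also have "\<dots> = (\<Sum>us\<in>?U. path_prob UNIV us)
      * (\<Sum>vs\<in>?V. g y B / outflow g B * path_prob (B - {y}) vs)"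
    by (simp only: sum.cartesian_product sum_product)
  also have "\<dots> = (\<Sum>us\<in>?U. path_prob UNIV us)
      * (g y B / outflow g B * (\<Sum>vs\<in>?V. path_prob (B - {y}) vs))"
    by (simp only: sum_distrib_left)
  also have "\<dots> = g y B / outflow g UNIV"
  proof (cases "g y B = 0")
    case False
    with nonneg[OF \<open>y \<in> B\<close>] have "0 < g y B" by simp
    moreover have "(\<Sum>us\<in>?U. path_prob UNIV us) = outflow g B / outflow g UNIV"
      using sum_path_prob_prefix[OF pos, of "UNIV - B"] \<open>y \<in> B\<close> by (auto simp: Diff_Diff_Int)
    ultimately show ?thesis
      using sum_path_prob_remove[OF \<open>y \<in> B\<close>]
      by (simp only: mult_1_right times_divide_eq_left mult_div_outflow[OF \<open>y \<in> B\<close>])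
  qed simp
  finally show ?thesis .
qed

theorem ex_lower_set_prob:
  "\<exists>\<pi>. set_pmf \<pi> \<subseteq> lin_orders \<and>
     (\<forall>y B. y \<in> B \<longrightarrow> g y B = outflow g UNIV * lower_set_prob \<pi> y B)"
proof (cases "outflow g UNIV = 0")
  case True
  obtain r :: "('a \<times> 'a) set" where "r \<in> lin_orders"
    using lin_orders_nonempty by blast
  then show ?thesis
    using True eq_0_if_total_eq_0[OF True] by (intro exI[of _ "return_pmf r"]) auto
next
  case False
  then have pos: "0 < outflow g UNIV"
    using outflow_nonneg by (simp add: order_less_le)
  have "\<exists>\<pi>. set_pmf \<pi> \<subseteq> lin_orders \<and> (\<forall>y B. lower_set_prob \<pi> y B
      = (\<Sum>xs\<in>permutations_of_set UNIV.
          if lower_set (order_of_list xs) y = B then path_prob UNIV xs else 0))"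
    using sum_path_prob[OF pos]
    by (intro ex_lower_set_prob_of_list_weights path_prob_nonneg)
      (auto simp: permutations_of_set_def)
  with pos show ?thesis
    by (auto simp: sum_path_prob_lower_set)
qed

end


section \<open>The matrix \<open>E\<close>\<close>

lemma E_rows_eq: "E_rows = lin_orders \<times> Pi\<^sub>E UNIV (\<lambda>_. lin_orders)"
  by (auto simp: E_rows_def PiE_UNIV_domain)

lemma E_mat_eq:
  fixes A B :: "'a::finite set"
  assumes "r \<in> lin_orders" "f x \<in> lin_orders" "x \<in> A" "y \<in> B"
  shows "E_mat (r, f) (x, y, A, B) = (if r \<in> Nx x A \<and> f x \<in> Nx y B then 1 else 0)"
proof -
  have "x = Mx r A \<longleftrightarrow> r \<in> Nx x A"
    using Mx_eq_iff_subset_lower_set[OF assms(1,3)] Nx_eq[OF assms(3)] assms(1) by auto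
  moreover have "y = Mx (f x) B \<longleftrightarrow> f x \<in> Nx y B"
    using Mx_eq_iff_subset_lower_set[OF assms(2,4)] Nx_eq[OF assms(4)] assms(2) by auto
  ultimately show ?thesis
    by (simp add: E_mat_def)
qed

lemma E_mat_row_sum:
  fixes A B :: "'a::finite set"
  assumes "(r, f) \<in> E_rows" "A \<noteq> {}" "B \<noteq> {}"
  shows "(\<Sum>x\<in>A. \<Sum>y\<in>B. E_mat (r, f) (x, y, A, B)) = 1"
proof -
  have "r \<in> lin_orders" "\<And>z. f z \<in> lin_orders"
    using assms(1) by (auto simp: E_rows_def)
  then have Mx: "Mx r A \<in> A" "\<And>z. Mx (f z) B \<in> B"
    using assms(2,3) by (auto intro: Mx_in)
  have "(\<Sum>x\<in>A. \<Sum>y\<in>B. E_mat (r, f) (x, y, A, B))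
      = (\<Sum>x\<in>A. if x = Mx r A then \<Sum>y\<in>B. if y = Mx (f x) B then 1 else 0 else 0)"
    by (intro sum.cong refl) (auto simp: E_mat_def)
  also have "\<dots> = 1"
    using Mx by simp
  finally show ?thesis .
qed

lemma E_mat_column_sum:
  fixes A B :: "'a::finite set"
  assumes "x \<in> A" "y \<in> B"
  shows "(\<Sum>rw\<in>E_rows. R rw * E_mat rw (x, y, A, B))
       = (\<Sum>r\<in>Nx x A. \<Sum>f\<in>Pi\<^sub>E UNIV (\<lambda>_. lin_orders). if f x \<in> Nx y B then R (r, f) else 0)"
proof -
  have "(\<Sum>rw\<in>E_rows. R rw * E_mat rw (x, y, A, B))
      = (\<Sum>r\<in>lin_orders. \<Sum>f\<in>Pi\<^sub>E UNIV (\<lambda>_. lin_orders). R (r, f) * E_mat (r, f) (x, y, A, B))"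
    by (simp add: E_rows_eq sum.cartesian_product)
  also have "\<dots> = (\<Sum>r\<in>lin_orders. if r \<in> Nx x A then
           \<Sum>f\<in>Pi\<^sub>E UNIV (\<lambda>_. lin_orders). if f x \<in> Nx y B then R (r, f) else 0 else 0)"
  proof (rule sum.cong[OF refl])
    fix r :: "('a \<times> 'a) set"
    assume r: "r \<in> lin_orders"
    have "R (r, f) * E_mat (r, f) (x, y, A, B)
        = (if r \<in> Nx x A then if f x \<in> Nx y B then R (r, f) else 0 else 0)"
      if "f \<in> Pi\<^sub>E UNIV (\<lambda>_. lin_orders)" for f
      using that r assms by (simp add: E_mat_eq PiE_iff)
    then have "(\<Sum>f\<in>Pi\<^sub>E UNIV (\<lambda>_. lin_orders). R (r, f) * E_mat (r, f) (x, y, A, B))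
        = (\<Sum>f\<in>Pi\<^sub>E UNIV (\<lambda>_. lin_orders).
            if r \<in> Nx x A then if f x \<in> Nx y B then R (r, f) else 0 else 0)"
      by (rule sum.cong[OF refl])
    then show "(\<Sum>f\<in>Pi\<^sub>E UNIV (\<lambda>_. lin_orders). R (r, f) * E_mat (r, f) (x, y, A, B))
        = (if r \<in> Nx x A then
           \<Sum>f\<in>Pi\<^sub>E UNIV (\<lambda>_. lin_orders). if f x \<in> Nx y B then R (r, f) else 0 else 0)"
      by (cases "r \<in> Nx x A") simp_all
  qed
  also have "\<dots> = (\<Sum>r\<in>Nx x A. \<Sum>f\<in>Pi\<^sub>E UNIV (\<lambda>_. lin_orders). if f x \<in> Nx y B then R (r, f) else 0)"
    using Nx_subset_lin_orders[of x A] by (simp add: sum.inter_restrict[symmetric] Int_absorb1)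
  finally show ?thesis .
qed

definition E_solvable ::
  "('a set \<times> 'a set) set \<Rightarrow> ('a \<Rightarrow> 'a \<Rightarrow> 'a set \<Rightarrow> 'a set \<Rightarrow> real) \<Rightarrow> bool" where
  "E_solvable Xlim p \<longleftrightarrow> (\<exists>r. (\<forall>rw\<in>E_rows. r rw \<ge> 0) \<and>
     (\<forall>cl\<in>E_cols Xlim. (\<Sum>rw\<in>E_rows. r rw * E_mat rw cl) = (case cl of (x, y, A, B) \<Rightarrow> p x y A B)))"

lemma sum_E_solution_eq_1:
  fixes A B :: "'a::finite set"
  assumes "A \<noteq> {}" "B \<noteq> {}" "(\<Sum>x\<in>A. \<Sum>y\<in>B. p x y A B) = 1"
    and col: "\<And>x y. x \<in> A \<Longrightarrow> y \<in> B \<Longrightarrow> (\<Sum>rw\<in>E_rows. R rw * E_mat rw (x, y, A, B)) = p x y A B"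
  shows "(\<Sum>rw\<in>E_rows. R rw) = 1"
proof -
  have "(\<Sum>rw\<in>E_rows. R rw) = (\<Sum>rw\<in>E_rows. R rw * (\<Sum>x\<in>A. \<Sum>y\<in>B. E_mat rw (x, y, A, B)))"
  proof (rule sum.cong[OF refl])
    fix rw :: "('a \<times> 'a) set \<times> ('a \<Rightarrow> ('a \<times> 'a) set)"
    assume "rw \<in> E_rows"
    then show "R rw = R rw * (\<Sum>x\<in>A. \<Sum>y\<in>B. E_mat rw (x, y, A, B))"
      using E_mat_row_sum[of "fst rw" "snd rw" A B] assms(1,2) by simp
  qed
  also have "\<dots> = (\<Sum>rw\<in>E_rows. \<Sum>x\<in>A. \<Sum>y\<in>B. R rw * E_mat rw (x, y, A, B))"
    by (simp only: sum_distrib_left)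
  also have "\<dots> = (\<Sum>x\<in>A. \<Sum>rw\<in>E_rows. \<Sum>y\<in>B. R rw * E_mat rw (x, y, A, B))"
    by (rule sum.swap)
  also have "\<dots> = (\<Sum>x\<in>A. \<Sum>y\<in>B. \<Sum>rw\<in>E_rows. R rw * E_mat rw (x, y, A, B))"
    by (rule sum.cong[OF refl]) (rule sum.swap)
  also have "\<dots> = 1"
    using assms(3) col by simp
  finally show ?thesis .
qed

lemma E_column_sum_product_weights:
  fixes \<nu> :: "('a::finite \<times> 'a) set pmf"
  assumes t: "\<forall>z. \<forall>r\<in>lin_orders. set_pmf (t z r) \<subseteq> lin_orders" and "x \<in> A" "y \<in> B"
  shows "(\<Sum>rw\<in>E_rows. (case rw of (r, f) \<Rightarrow> pmf \<nu> r * (\<Prod>z\<in>UNIV. pmf (t z r) (f z)))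
            * E_mat rw (x, y, A, B))
       = (\<Sum>r\<in>Nx x A. \<Sum>r'\<in>Nx y B. pmf \<nu> r * pmf (t x r) r')"
proof -
  have inner: "(\<Sum>f\<in>Pi\<^sub>E UNIV (\<lambda>_. lin_orders).
          if f x \<in> Nx y B then pmf \<nu> r * (\<Prod>z\<in>UNIV. pmf (t z r) (f z)) else 0)
      = (\<Sum>r'\<in>Nx y B. pmf \<nu> r * pmf (t x r) r')" if "r \<in> Nx x A" for r
  proof -
    have "r \<in> lin_orders" using subsetD[OF Nx_subset_lin_orders that] .
    then have "(\<Sum>f\<in>Pi\<^sub>E UNIV (\<lambda>_. lin_orders).
          if f x \<in> Nx y B then \<Prod>z\<in>UNIV. pmf (t z r) (f z) else 0)
        = (\<Sum>r'\<in>Nx y B. pmf (t x r) r')"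
      using t by (intro sum_PiE_prod_pmf_component Nx_subset_lin_orders) auto
    moreover have "(\<Sum>f\<in>Pi\<^sub>E UNIV (\<lambda>_. lin_orders).
          if f x \<in> Nx y B then pmf \<nu> r * (\<Prod>z\<in>UNIV. pmf (t z r) (f z)) else 0)
        = pmf \<nu> r * (\<Sum>f\<in>Pi\<^sub>E UNIV (\<lambda>_. lin_orders).
            if f x \<in> Nx y B then \<Prod>z\<in>UNIV. pmf (t z r) (f z) else 0)"
      by (auto simp: sum_distrib_left intro!: sum.cong)
    ultimately show ?thesis by (simp add: sum_distrib_left)
  qed
  show ?thesis
    unfolding E_mat_column_sum[OF assms(2,3)] prod.case by (rule sum.cong[OF refl inner])
qed

lemma ex_kernel_rep_of_E_solution:
  fixes R :: "('a::finite \<times> 'a) set \<times> ('a \<Rightarrow> ('a \<times> 'a) set) \<Rightarrow> real"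
  assumes R_nonneg: "\<forall>rw\<in>E_rows. 0 \<le> R rw" and total: "(\<Sum>rw\<in>E_rows. R rw) = 1"
  shows "\<exists>\<nu> t. set_pmf \<nu> \<subseteq> lin_orders \<and> (\<forall>x r. set_pmf (t x r) \<subseteq> lin_orders) \<and>
    (\<forall>x y A B. x \<in> A \<longrightarrow> y \<in> B \<longrightarrow> (\<Sum>rw\<in>E_rows. R rw * E_mat rw (x, y, A, B))
       = (\<Sum>r\<in>Nx x A. \<Sum>r'\<in>Nx y B. pmf \<nu> r * pmf (t x r) r'))"
proof -
  have "\<exists>\<nu> t. set_pmf \<nu> \<subseteq> lin_orders \<and> (\<forall>x r. set_pmf (t x r) \<subseteq> lin_orders) \<and>
    (\<forall>x. \<forall>r\<in>lin_orders. \<forall>T\<subseteq>lin_orders.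
      (\<Sum>f\<in>Pi\<^sub>E UNIV (\<lambda>_. lin_orders). if f x \<in> T then R (r, f) else 0)
      = (\<Sum>s\<in>T. pmf \<nu> r * pmf (t x r) s))"
  proof (rule ex_marginal_and_kernel[where U = lin_orders and F = "Pi\<^sub>E UNIV (\<lambda>_. lin_orders)"
        and S = lin_orders and w = "\<lambda>r f. R (r, f)"])
    show "finite (Pi\<^sub>E (UNIV :: 'a set) (\<lambda>_. lin_orders :: ('a \<times> 'a) set set))"
      by (intro finite_PiE) simp_all
    show "0 \<le> R (r, f)" if "r \<in> lin_orders" "f \<in> Pi\<^sub>E UNIV (\<lambda>_. lin_orders)" for r f
      using R_nonneg that by (simp add: E_rows_eq)
    show "f x \<in> lin_orders" if "f \<in> Pi\<^sub>E UNIV (\<lambda>_. lin_orders)" for f :: "'a \<Rightarrow> ('a \<times> 'a) set" and x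
      using that by (simp add: PiE_iff)
    show "(\<Sum>r\<in>lin_orders. \<Sum>f\<in>Pi\<^sub>E UNIV (\<lambda>_. lin_orders). R (r, f)) = 1"
      using total by (simp add: E_rows_eq sum.cartesian_product)
  qed simp_all
  then obtain \<nu> t where \<nu>: "set_pmf \<nu> \<subseteq> lin_orders" and t: "\<forall>x r. set_pmf (t x r) \<subseteq> lin_orders"
    and kernel: "\<forall>x. \<forall>r\<in>lin_orders. \<forall>T\<subseteq>lin_orders.
      (\<Sum>f\<in>Pi\<^sub>E UNIV (\<lambda>_. lin_orders). if f x \<in> T then R (r, f) else 0)
      = (\<Sum>s\<in>T. pmf \<nu> r * pmf (t x r) s)"
    by (elim exE conjE)
  have "(\<Sum>rw\<in>E_rows. R rw * E_mat rw (x, y, A, B))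
      = (\<Sum>r\<in>Nx x A. \<Sum>r'\<in>Nx y B. pmf \<nu> r * pmf (t x r) r')" if "x \<in> A" "y \<in> B" for x y A B
    unfolding E_mat_column_sum[OF that]
    by (intro sum.cong refl kernel[rule_format] subsetD[OF Nx_subset_lin_orders]
        Nx_subset_lin_orders)
  with \<nu> t show ?thesis by blast
qed

lemma cdru_rep_imp_E_solvable:
  fixes p :: "'a::finite \<Rightarrow> 'a \<Rightarrow> 'a set \<Rightarrow> 'a set \<Rightarrow> real"
  assumes "cdru_rep Xlim p"
  shows "E_solvable Xlim p"
proof -
  obtain \<nu> t where t: "\<forall>x. \<forall>r\<in>lin_orders. set_pmf (t x r) \<subseteq> lin_orders"
    and rep: "\<forall>(A, B)\<in>Xlim. \<forall>x\<in>A. \<forall>y\<in>B.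
      p x y A B = (\<Sum>r\<in>Nx x A. \<Sum>r'\<in>Nx y B. pmf \<nu> r * pmf (t x r) r')"
    using assms unfolding cdru_rep_def by blast
  define R where "R = (\<lambda>(r, f). pmf \<nu> r * (\<Prod>z\<in>UNIV. pmf (t z r) (f z)))"
  have "\<forall>rw\<in>E_rows. R rw \<ge> 0"
    by (auto simp: R_def prod_nonneg)
  moreover have "(\<Sum>rw\<in>E_rows. R rw * E_mat rw (x, y, A, B)) = p x y A B"
    if "(A, B) \<in> Xlim" "x \<in> A" "y \<in> B" for x y A B
    using E_column_sum_product_weights[OF t that(2,3), of \<nu>] rep that by (auto simp: R_def)
  ultimately show ?thesis
    unfolding E_solvable_def E_cols_def by (intro exI[of _ R]) auto
qed

lemma E_solvable_imp_cdru_rep: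
  fixes p :: "'a::finite \<Rightarrow> 'a \<Rightarrow> 'a set \<Rightarrow> 'a set \<Rightarrow> real"
  assumes Xlim: "\<forall>(A, B)\<in>Xlim. A \<noteq> {} \<and> B \<noteq> {}" and p: "observed_rjcr Xlim p"
    and "E_solvable Xlim p"
  shows "cdru_rep Xlim p"
proof (cases "Xlim = {}")
  case True
  obtain r :: "('a \<times> 'a) set" where "r \<in> lin_orders"
    using lin_orders_nonempty by blast
  then show ?thesis
    unfolding cdru_rep_def True
    by (intro exI[of _ "return_pmf r"] exI[of _ "\<lambda>_ _. return_pmf r"]) simp
next
  case False
  obtain R where R_nonneg: "\<forall>rw\<in>E_rows. 0 \<le> R rw"
    and R_col: "\<forall>cl\<in>E_cols Xlim.
      (\<Sum>rw\<in>E_rows. R rw * E_mat rw cl) = (case cl of (x, y, A, B) \<Rightarrow> p x y A B)"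
    using assms(3) unfolding E_solvable_def by blast
  have col: "(\<Sum>rw\<in>E_rows. R rw * E_mat rw (x, y, A, B)) = p x y A B"
    if "(A, B) \<in> Xlim" "x \<in> A" "y \<in> B" for x y A B
    using R_col that by (auto simp: E_cols_def)
  obtain A0 B0 where "(A0, B0) \<in> Xlim" using False by auto
  with Xlim p have "(\<Sum>rw\<in>E_rows. R rw) = 1"
    by (intro sum_E_solution_eq_1[of A0 B0 p] col) (auto simp: observed_rjcr_def)
  obtain \<nu> t where "set_pmf \<nu> \<subseteq> lin_orders" "\<forall>x r. set_pmf (t x r) \<subseteq> lin_orders"
    and rep: "\<forall>x y A B. x \<in> A \<longrightarrow> y \<in> B \<longrightarrow> (\<Sum>rw\<in>E_rows. R rw * E_mat rw (x, y, A, B))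
       = (\<Sum>r\<in>Nx x A. \<Sum>r'\<in>Nx y B. pmf \<nu> r * pmf (t x r) r')"
    using ex_kernel_rep_of_E_solution[OF R_nonneg \<open>(\<Sum>rw\<in>E_rows. R rw) = 1\<close>] by (elim exE conjE)
  moreover have "p x y A B = (\<Sum>r\<in>Nx x A. \<Sum>r'\<in>Nx y B. pmf \<nu> r * pmf (t x r) r')"
    if "(A, B) \<in> Xlim" "x \<in> A" "y \<in> B" for x y A B
    using col[OF that] rep that by simp
  ultimately show ?thesis
    unfolding cdru_rep_def by blast
qed


section \<open>Moebius flows\<close>

text \<open>The function \<open>q\<close> of statement (3) induced by a representation \<open>(\<nu>, t)\<close>.\<close>
definition joint_lower_set_prob :: "('a \<times> 'a) set pmf \<Rightarrow> ('a \<Rightarrow> ('a \<times> 'a) set \<Rightarrow> ('a \<times> 'a) set pmf)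
    \<Rightarrow> 'a \<Rightarrow> 'a \<Rightarrow> 'a set \<Rightarrow> 'a set \<Rightarrow> real" where
  "joint_lower_set_prob \<nu> t x y A B =
     (\<Sum>r\<in>lin_orders. if lower_set r x = A then pmf \<nu> r * lower_set_prob (t x r) y B else 0)"

lemma joint_lower_set_prob_nonneg: "0 \<le> joint_lower_set_prob \<nu> t x y A B"
  unfolding joint_lower_set_prob_def by (auto intro!: sum_nonneg simp: lower_set_prob_nonneg)

lemma sum_joint_lower_set_prob:
  "(\<Sum>i\<in>I. joint_lower_set_prob \<nu> t x (Y i) A (F i))
   = (\<Sum>r\<in>lin_orders. if lower_set r x = A
       then pmf \<nu> r * (\<Sum>i\<in>I. lower_set_prob (t x r) (Y i) (F i)) else 0)"
  unfolding joint_lower_set_prob_def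
  by (subst sum.swap) (simp only: sum_if_const sum_distrib_left)

lemma joint_lower_set_prob_conservation:
  fixes B :: "'a::finite set"
  assumes "B \<noteq> {}" "B \<noteq> UNIV"
  shows "(\<Sum>y\<in>B. joint_lower_set_prob \<nu> t x y A B)
       = (\<Sum>z\<in>UNIV - B. joint_lower_set_prob \<nu> t x z A (insert z B))"
  using sum_joint_lower_set_prob[where Y = "\<lambda>y. y" and F = "\<lambda>_. B"]
    sum_joint_lower_set_prob[where Y = "\<lambda>y. y" and F = "\<lambda>z. insert z B"]
  by (simp add: lower_set_prob_conservation[OF assms] cong: if_cong)

lemma sum_joint_lower_set_prob_UNIV:
  fixes x :: "'a::finite"
  assumes "\<forall>r\<in>lin_orders. set_pmf (t x r) \<subseteq> lin_orders"
  shows "(\<Sum>y\<in>UNIV. joint_lower_set_prob \<nu> t x y A UNIV) = lower_set_prob \<nu> x A"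
proof -
  have "(\<Sum>y\<in>UNIV. joint_lower_set_prob \<nu> t x y A UNIV)
      = (\<Sum>r\<in>lin_orders. if lower_set r x = A
          then pmf \<nu> r * (\<Sum>y\<in>UNIV. lower_set_prob (t x r) y UNIV) else 0)"
    by (rule sum_joint_lower_set_prob)
  also have "\<dots> = (\<Sum>r\<in>lin_orders. if lower_set r x = A then pmf \<nu> r else 0)"
    using assms by (intro sum.cong refl) (simp add: sum_lower_set_prob_UNIV)
  finally show ?thesis
    by (simp add: lower_set_prob_def)
qed

lemma sum_supersets_joint_lower_set_prob:
  fixes A B :: "'a::finite set"
  assumes "x \<in> A" "y \<in> B"
  shows "(\<Sum>A'\<in>{A'. A \<subseteq> A'}. \<Sum>B'\<in>{B'. B \<subseteq> B'}. joint_lower_set_prob \<nu> t x y A' B')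
       = (\<Sum>r\<in>Nx x A. \<Sum>r'\<in>Nx y B. pmf \<nu> r * pmf (t x r) r')"
  by (simp only: sum_joint_lower_set_prob[where Y = "\<lambda>_. y" and F = "\<lambda>B'. B'"]
      sum_supersets_lower_set_prob[OF assms(2)] sum_supersets_lower_set[OF assms(1)]
      sum_distrib_left)

lemma joint_lower_set_prob_factor:
  "joint_lower_set_prob \<nu> (\<lambda>x r. T x (lower_set r x)) x y A B
   = lower_set_prob \<nu> x A * lower_set_prob (T x A) y B"
  unfolding joint_lower_set_prob_def lower_set_prob_def[of \<nu>] sum_distrib_right
  by (intro sum.cong refl) simp

definition mobius_flow :: "('a set \<times> 'a set) set \<Rightarrow> ('a \<Rightarrow> 'a \<Rightarrow> 'a set \<Rightarrow> 'a set \<Rightarrow> real)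
    \<Rightarrow> ('a \<Rightarrow> 'a \<Rightarrow> 'a set \<Rightarrow> 'a set \<Rightarrow> real) \<Rightarrow> bool" where
  "mobius_flow Xlim p q \<longleftrightarrow>
    (\<forall>(A, B)\<in>Xlim. \<forall>x\<in>A. \<forall>y\<in>B.
       (\<Sum>A'\<in>{A'. A \<subseteq> A'}. \<Sum>B'\<in>{B'. B \<subseteq> B'}. q x y A' B') = p x y A B) \<and>
    (\<forall>A B x. A \<noteq> {} \<and> B \<noteq> {} \<and> B \<noteq> UNIV \<and> x \<in> A \<longrightarrow>
       (\<Sum>y\<in>B. q x y A B) = (\<Sum>z\<in>UNIV - B. q x z A (insert z B))) \<and>
    (\<forall>A B x y. A \<noteq> {} \<and> B \<noteq> {} \<and> x \<in> A \<and> y \<in> B \<longrightarrow> q x y A B \<ge> 0) \<and>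
    (\<forall>A. A \<noteq> {} \<and> A \<noteq> UNIV \<longrightarrow>
       (\<Sum>x\<in>A. \<Sum>y\<in>UNIV. q x y A UNIV) = (\<Sum>z\<in>UNIV - A. \<Sum>y\<in>UNIV. q z y (insert z A) UNIV)) \<and>
    (\<Sum>x\<in>UNIV. \<Sum>y\<in>UNIV. q x y UNIV UNIV) = 1"

lemma cdru_rep_imp_mobius_flow:
  fixes p :: "'a::finite \<Rightarrow> 'a \<Rightarrow> 'a set \<Rightarrow> 'a set \<Rightarrow> real"
  assumes "cdru_rep Xlim p"
  shows "\<exists>q. mobius_flow Xlim p q"
proof -
  obtain \<nu> t where \<nu>: "set_pmf \<nu> \<subseteq> lin_orders"
    and t: "\<forall>x. \<forall>r\<in>lin_orders. set_pmf (t x r) \<subseteq> lin_orders"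
    and rep: "\<forall>(A, B)\<in>Xlim. \<forall>x\<in>A. \<forall>y\<in>B.
      p x y A B = (\<Sum>r\<in>Nx x A. \<Sum>r'\<in>Nx y B. pmf \<nu> r * pmf (t x r) r')"
    using assms unfolding cdru_rep_def by blast
  have marginal: "(\<Sum>y\<in>UNIV. joint_lower_set_prob \<nu> t x y A UNIV) = lower_set_prob \<nu> x A" for x A
    using t by (simp add: sum_joint_lower_set_prob_UNIV)
  have "mobius_flow Xlim p (joint_lower_set_prob \<nu> t)"
    unfolding mobius_flow_def
  proof (intro conjI allI impI)
    show "\<forall>(A, B)\<in>Xlim. \<forall>x\<in>A. \<forall>y\<in>B. (\<Sum>A'\<in>{A'. A \<subseteq> A'}. \<Sum>B'\<in>{B'. B \<subseteq> B'}.
        joint_lower_set_prob \<nu> t x y A' B') = p x y A B"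
      using rep by (auto simp: sum_supersets_joint_lower_set_prob)
    show "(\<Sum>x\<in>A. \<Sum>y\<in>UNIV. joint_lower_set_prob \<nu> t x y A UNIV)
        = (\<Sum>z\<in>UNIV - A. \<Sum>y\<in>UNIV. joint_lower_set_prob \<nu> t z y (insert z A) UNIV)"
      if "A \<noteq> {} \<and> A \<noteq> UNIV" for A
      using that by (simp add: marginal lower_set_prob_conservation)
    show "(\<Sum>x\<in>UNIV. \<Sum>y\<in>UNIV. joint_lower_set_prob \<nu> t x y UNIV UNIV) = 1"
      using \<nu> by (simp add: marginal sum_lower_set_prob_UNIV)
  qed (simp_all add: joint_lower_set_prob_conservation joint_lower_set_prob_nonneg)
  then show ?thesis by blast
qed

lemma mobius_flow_marginal_flow:
  fixes q :: "'a::finite \<Rightarrow> 'a \<Rightarrow> 'a set \<Rightarrow> 'a set \<Rightarrow> real"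
  assumes "mobius_flow Xlim p q"
  shows "flow (\<lambda>x A. \<Sum>y\<in>UNIV. q x y A UNIV)" "outflow (\<lambda>x A. \<Sum>y\<in>UNIV. q x y A UNIV) UNIV = 1"
proof -
  have c: "\<forall>A B x y. A \<noteq> {} \<and> B \<noteq> {} \<and> x \<in> A \<and> y \<in> B \<longrightarrow> q x y A B \<ge> 0"
    and d: "\<forall>A. A \<noteq> {} \<and> A \<noteq> UNIV \<longrightarrow>
      (\<Sum>x\<in>A. \<Sum>y\<in>UNIV. q x y A UNIV) = (\<Sum>z\<in>UNIV - A. \<Sum>y\<in>UNIV. q z y (insert z A) UNIV)"
    and e: "(\<Sum>x\<in>UNIV. \<Sum>y\<in>UNIV. q x y UNIV UNIV) = 1"
    using assms unfolding mobius_flow_def by simp_all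
  show "flow (\<lambda>x A. \<Sum>y\<in>UNIV. q x y A UNIV)"
  proof (rule flow.intro)
    show "0 \<le> (\<Sum>y\<in>UNIV. q x y A UNIV)" if "x \<in> A" for x A
      using c that by (blast intro: sum_nonneg)
    show "outflow (\<lambda>x A. \<Sum>y\<in>UNIV. q x y A UNIV) B
        = (\<Sum>z\<in>UNIV - B. \<Sum>y\<in>UNIV. q z y (insert z B) UNIV)" if "B \<noteq> {}" "B \<noteq> UNIV" for B
      unfolding outflow_def using d that by blast
  qed
  show "outflow (\<lambda>x A. \<Sum>y\<in>UNIV. q x y A UNIV) UNIV = 1"
    using e by (simp add: outflow_def)
qed

lemma mobius_flow_conditional_flow:
  fixes q :: "'a::finite \<Rightarrow> 'a \<Rightarrow> 'a set \<Rightarrow> 'a set \<Rightarrow> real"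
  assumes "mobius_flow Xlim p q" "x \<in> A"
  shows "flow (\<lambda>y B. q x y A B)"
proof -
  have b: "\<forall>A B x. A \<noteq> {} \<and> B \<noteq> {} \<and> B \<noteq> UNIV \<and> x \<in> A \<longrightarrow>
      (\<Sum>y\<in>B. q x y A B) = (\<Sum>z\<in>UNIV - B. q x z A (insert z B))"
    and c: "\<forall>A B x y. A \<noteq> {} \<and> B \<noteq> {} \<and> x \<in> A \<and> y \<in> B \<longrightarrow> q x y A B \<ge> 0"
    using assms(1) unfolding mobius_flow_def by simp_all
  show ?thesis
  proof (rule flow.intro)
    show "0 \<le> q x y A B" if "y \<in> B" for y B
      using c assms(2) that by blast
    show "outflow (\<lambda>y B. q x y A B) B = (\<Sum>z\<in>UNIV - B. q x z A (insert z B))"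
      if "B \<noteq> {}" "B \<noteq> UNIV" for B
      unfolding outflow_def using b assms(2) that by blast
  qed
qed

lemma mobius_flow_ex_conditional_kernel:
  fixes q :: "'a::finite \<Rightarrow> 'a \<Rightarrow> 'a set \<Rightarrow> 'a set \<Rightarrow> real"
  assumes "mobius_flow Xlim p q"
  shows "\<exists>T. \<forall>x A. x \<in> A \<longrightarrow> set_pmf (T x A) \<subseteq> lin_orders \<and>
    (\<forall>y B. y \<in> B \<longrightarrow> q x y A B = (\<Sum>y'\<in>UNIV. q x y' A UNIV) * lower_set_prob (T x A) y B)"
proof -
  have "\<forall>x A. \<exists>\<pi>. x \<in> A \<longrightarrow> set_pmf \<pi> \<subseteq> lin_orders \<and>
    (\<forall>y B. y \<in> B \<longrightarrow> q x y A B = (\<Sum>y'\<in>UNIV. q x y' A UNIV) * lower_set_prob \<pi> y B)"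
  proof (intro allI)
    fix x A
    show "\<exists>\<pi>. x \<in> A \<longrightarrow> set_pmf \<pi> \<subseteq> lin_orders \<and>
      (\<forall>y B. y \<in> B \<longrightarrow> q x y A B = (\<Sum>y'\<in>UNIV. q x y' A UNIV) * lower_set_prob \<pi> y B)"
    proof (cases "x \<in> A")
      case True
      then show ?thesis
        using flow.ex_lower_set_prob[OF mobius_flow_conditional_flow[OF assms True]]
        by (simp add: outflow_def)
    qed simp
  qed
  then show ?thesis
    by (simp only: choice_iff)
qed

lemma mobius_flow_imp_cdru_rep:
  fixes p q :: "'a::finite \<Rightarrow> 'a \<Rightarrow> 'a set \<Rightarrow> 'a set \<Rightarrow> real"
  assumes mf: "mobius_flow Xlim p q"
  shows "cdru_rep Xlim p"
proof -
  define g where "g x A = (\<Sum>y\<in>UNIV. q x y A UNIV)" for x A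
  obtain \<nu> where \<nu>: "set_pmf \<nu> \<subseteq> lin_orders"
    and \<nu>_eq: "\<forall>y B. y \<in> B \<longrightarrow> g y B = lower_set_prob \<nu> y B"
    using flow.ex_lower_set_prob[OF mobius_flow_marginal_flow(1)[OF mf]]
      mobius_flow_marginal_flow(2)[OF mf] by (auto simp: g_def)
  obtain T where T: "\<forall>x A. x \<in> A \<longrightarrow> set_pmf (T x A) \<subseteq> lin_orders \<and>
      (\<forall>y B. y \<in> B \<longrightarrow> q x y A B = g x A * lower_set_prob (T x A) y B)"
    using mobius_flow_ex_conditional_kernel[OF mf] unfolding g_def by blast
  define t where "t = (\<lambda>x r. T x (lower_set r x))"
  have t: "\<forall>x. \<forall>r\<in>lin_orders. set_pmf (t x r) \<subseteq> lin_orders"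
    using T by (auto simp: t_def lower_set_def)
  have q_eq: "q x y A B = joint_lower_set_prob \<nu> t x y A B" if "x \<in> A" "y \<in> B" for x y A B
    using T \<nu>_eq that by (simp add: t_def joint_lower_set_prob_factor)
  have "p x y A B = (\<Sum>r\<in>Nx x A. \<Sum>r'\<in>Nx y B. pmf \<nu> r * pmf (t x r) r')"
    if "(A, B) \<in> Xlim" "x \<in> A" "y \<in> B" for x y A B
  proof -
    have "p x y A B = (\<Sum>A'\<in>{A'. A \<subseteq> A'}. \<Sum>B'\<in>{B'. B \<subseteq> B'}. q x y A' B')"
      using mf that unfolding mobius_flow_def by fastforce
    also have "\<dots> = (\<Sum>A'\<in>{A'. A \<subseteq> A'}. \<Sum>B'\<in>{B'. B \<subseteq> B'}. joint_lower_set_prob \<nu> t x y A' B')"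
      using that by (intro sum.cong refl q_eq) auto
    also have "\<dots> = (\<Sum>r\<in>Nx x A. \<Sum>r'\<in>Nx y B. pmf \<nu> r * pmf (t x r) r')"
      by (rule sum_supersets_joint_lower_set_prob[OF that(2,3)])
    finally show ?thesis .
  qed
  with \<nu> t show ?thesis
    unfolding cdru_rep_def by blast
qed

theorem theorem7:
  fixes Xlim :: "('a::finite set \<times> 'a set) set"
    and p :: "'a \<Rightarrow> 'a \<Rightarrow> 'a set \<Rightarrow> 'a set \<Rightarrow> real"
  assumes Xlim_sub: "\<forall>(A, B)\<in>Xlim. A \<noteq> {} \<and> B \<noteq> {}"
    and p_rule: "observed_rjcr Xlim p"
  shows "(cdru_rep Xlim p
          \<longleftrightarrow> (\<exists>r. (\<forall>rw\<in>E_rows. r rw \<ge> 0) \<and>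
                 (\<forall>cl\<in>E_cols Xlim. (\<Sum>rw\<in>E_rows. r rw * E_mat rw cl) = (case cl of (x, y, A, B) \<Rightarrow> p x y A B))))
       \<and> (cdru_rep Xlim p
          \<longleftrightarrow> (\<exists>q :: 'a \<Rightarrow> 'a \<Rightarrow> 'a set \<Rightarrow> 'a set \<Rightarrow> real.
                (\<forall>(A, B)\<in>Xlim. \<forall>x\<in>A. \<forall>y\<in>B.
                   (\<Sum>A'\<in>{A'. A \<subseteq> A'}. \<Sum>B'\<in>{B'. B \<subseteq> B'}. q x y A' B') = p x y A B) \<and>
                (\<forall>A B x. A \<noteq> {} \<and> B \<noteq> {} \<and> B \<noteq> UNIV \<and> x \<in> A \<longrightarrow>
                   (\<Sum>y\<in>B. q x y A B) = (\<Sum>z\<in>UNIV - B. q x z A (insert z B))) \<and>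
                (\<forall>A B x y. A \<noteq> {} \<and> B \<noteq> {} \<and> x \<in> A \<and> y \<in> B \<longrightarrow> q x y A B \<ge> 0) \<and>
                (\<forall>A. A \<noteq> {} \<and> A \<noteq> UNIV \<longrightarrow>
                   (\<Sum>x\<in>A. \<Sum>y\<in>UNIV. q x y A UNIV) =
                   (\<Sum>z\<in>UNIV - A. \<Sum>y\<in>UNIV. q z y (insert z A) UNIV)) \<and>
                (\<Sum>x\<in>UNIV. \<Sum>y\<in>UNIV. q x y UNIV UNIV) = 1))"
proof -
  have "cdru_rep Xlim p \<longleftrightarrow> E_solvable Xlim p"
    using cdru_rep_imp_E_solvable E_solvable_imp_cdru_rep[OF Xlim_sub p_rule] by blast
  moreover have "cdru_rep Xlim p \<longleftrightarrow> (\<exists>q. mobius_flow Xlim p q)"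
    using cdru_rep_imp_mobius_flow mobius_flow_imp_cdru_rep by blast
  ultimately show ?thesis
    unfolding E_solvable_def mobius_flow_def by (rule conjI)
qed

end
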